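(* Let $F$ and the basis $\eta_1,\dots,\eta_n$ of $\mathrm{Lift}(F)$ be as described below. If $\eta=\sum_{j=1}^n b_j(X)\eta_j(X)\in\mathrm{Lift}(F)$ with $b_j\in\mathcal O_n$, then there exists $\xi\in\theta_n$ with $\eta\circ F=dF(\xi)$ whose linear part at $0$ has eigenvalues $b_1(0)\cdot 1,\ b_1(0)n,\ b_1(0)(n-1),\ \dots,\ b_1(0)\cdot 2$.
   Context: $F:(\mathbb C^n,0)\to(\mathbb C^n,0)$, $F(x_1,\dots,x_n)=(x_1^{n+1}+x_2x_1+x_3x_1^2+\cdots+x_nx_1^{n-1},x_2,\dots,x_n)$ is the stable unfolding of the $A_n$ singularity. $\mathcal O_n$ is the ring of germs of holomorphic functions on $(\mathbb C^n,0)$, $\theta_n$ the module of germs of vector fields. $\eta\in\theta_n$ is liftable for $F$ if $\eta\circ F=dF(\xi)$ for some $\xi\in\theta_n$; $\mathrm{Lift}(F)$ is the set of liftable vector fields. It is known that $\mathrm{Lift}(F)$ is a free $\mathcal O_n$-module with a basis $\eta_1,\dots,\eta_n$, $\eta_j=\eta_j^L+\eta_j^{\ge2}$ with $\eta_j^{\ge2}$ of order $\ge2$, and linear parts $\eta_1^L=(n+1)X_1\partial_{X_1}+nX_2\partial_{X_2}+\cdots+2X_n\partial_{X_n}$ and, for $2\le i\le n$, $\eta_i^L=(n+1)X_1\partial_{X_i}+nX_2\partial_{X_{i+1}}+\cdots+(i+1)X_{n+1-i}\partial_{X_n}$. Eigenvalues of a vector field vanishing at $0$ mean those of the matrix of its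 linear part. *)

theory Defs
  imports "HOL-Analysis.Analysis"
begin

text \<open>Points of C^n are vectors complex^'n with n = CARD('n); the coordinates
  x_1,...,x_n are x $ idx 1, ..., x $ idx n for a fixed bijection idx from {1..n}
  onto the index type.  Germs at 0 are represented by total functions, holomorphic
  on some open neighbourhood of 0; equalities of germs are equalities holding
  eventually in nhds 0.\<close>

definition holo_map :: "(complex^'n \<Rightarrow> complex^'m) \<Rightarrow> bool" where
  "holo_map f \<longleftrightarrow> (\<exists>U. open U \<and> 0 \<in> U \<and>
     (\<forall>x\<in>U. \<exists>D. (f has_derivative D) (at x) \<and> (\<forall>c v. D (c *s v) = c *s D v)))"

definition holo_fun :: "(complex^'n \<Rightarrow> complex) \<Rightarrow> bool" where
  "holo_fun f \<longleftrightarrow> (\<exists>U. open U \<and> 0 \<in> U \<and>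
     (\<forall>x\<in>U. \<exists>D. (f has_derivative D) (at x) \<and> (\<forall>c v. D (c *s v) = c * D v)))"

text \<open>The stable unfolding of A_n:
  F(x) = (x_1^(n+1) + x_2 x_1 + ... + x_n x_1^(n-1), x_2, ..., x_n).\<close>
definition FA :: "(nat \<Rightarrow> 'n::finite) \<Rightarrow> complex^'n \<Rightarrow> complex^'n" where
  "FA idx x = (\<chi> i. if i = idx 1
       then (x $ idx 1) ^ (CARD('n) + 1) + (\<Sum>k\<in>{2..CARD('n)}. x $ idx k * (x $ idx 1) ^ (k - 1))
       else x $ i)"

definition liftable :: "(complex^'n \<Rightarrow> complex^'n) \<Rightarrow> (complex^'n \<Rightarrow> complex^'n) \<Rightarrow> bool" where
  "liftable F eta \<longleftrightarrow> holo_map eta \<and>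
     (\<exists>xi. holo_map xi \<and>
        eventually (\<lambda>x. eta (F x) = frechet_derivative F (at x) (xi x)) (nhds 0))"

text \<open>Linear parts: eta_j^L = sum_{k=1}^{n+1-j} (n+2-k) X_k d/dX_{k+j-1};
  i.e. the coordinate m (j <= m <= n) equals (n+1+j-m) X_{m+1-j}.\<close>
definition etaL :: "(nat \<Rightarrow> 'n::finite) \<Rightarrow> nat \<Rightarrow> complex^'n \<Rightarrow> complex^'n" where
  "etaL idx j X = (\<Sum>m\<in>{j..CARD('n)}.
       axis (idx m) (of_nat (CARD('n) + 1 + j - m) * X $ idx (m + 1 - j)))"

end

theory Submission
  imports Defs
begin

(* Off the first coordinate dF is
   the identity and F fixes the x_m-axes for m >= 2; hence for those columns the derivative of xi
   at 0 agrees, off the first row, with the linear part sum_j b_j(0) eta_j^L, which is lower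
   triangular with diagonal entries b_1(0) (n + 2 - m). On the x_1-axis F(s e_1) = s^(n+1) e_1,
   and the first component of the lift equation reads
   (n+1) s^n xi_1(s e_1) + O(s^(n+1)) = eta_1(s^(n+1) e_1) = (n+1) b_1(0) s^(n+1) + o(s^(n+1)),
   so xi(0) = 0 and the derivative maps e_1 to b_1(0) e_1. In the coordinate order
   x_2, ..., x_n, x_1 the derivative is triangular, and its diagonal gives the eigenvalues. *)

lemma norm_vector_smult: "norm (c *s (x::complex^'n)) = norm c * norm x"
  unfolding norm_vec_def by (simp add: norm_mult L2_set_right_distrib)

lemma tendsto_vector_smult [tendsto_intros]:
  assumes "(f \<longlongrightarrow> a) F" "(g \<longlongrightarrow> b) F"
  shows "((\<lambda>x. f x *s (g x :: complex^'n)) \<longlongrightarrow> a *s b) F"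
  by (rule vec_tendstoI) (unfold vector_smult_component, intro tendsto_mult tendsto_vec_nth assms)

lemma tendsto_vector_smult_at_0: "((\<lambda>u::complex. u *s (v::complex^'n)) \<longlongrightarrow> 0) (at 0)"
  using tendsto_vector_smult[OF tendsto_ident_at tendsto_const, where a=0 and b=v] by simp

lemma eventually_nhds_0_along_line:
  "eventually P (nhds 0) \<Longrightarrow> eventually (\<lambda>u::complex. P (u *s (v::complex^'n))) (at 0)"
  using tendsto_vector_smult_at_0[of v] unfolding filterlim_iff by blast

lemma holo_fun_isCont_0: "holo_fun f \<Longrightarrow> isCont f 0"
  unfolding holo_fun_def using has_derivative_continuous by blast

lemma has_derivative_vec_lambda:
  fixes f :: "'a::euclidean_space \<Rightarrow> 'b::real_normed_vector^'m"
  assumes "\<And>i. ((\<lambda>x. f x $ i) has_derivative f' i) (at x)"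
  shows "(f has_derivative (\<lambda>h. \<chi> i. f' i h)) (at x)"
proof -
  have "bounded_linear (f' i)" for i
    using assms has_derivative_bounded_linear by blast
  then have "linear (\<lambda>h. \<chi> i. f' i h)"
    by (intro linearI) (auto simp: vec_eq_iff bounded_linear.linear linear_add linear_scale)
  moreover have "((\<lambda>y. (f y - f x - (\<chi> i. f' i (y - x))) /\<^sub>R norm (y - x)) \<longlongrightarrow> 0) (at x)"
  proof (rule vec_tendstoI)
    fix i
    show "((\<lambda>y. ((f y - f x - (\<chi> i. f' i (y - x))) /\<^sub>R norm (y - x)) $ i) \<longlongrightarrow> 0 $ i) (at x)"
      using assms[of i] unfolding has_derivative_at_within by simp
  qed
  ultimately show ?thesis
    unfolding has_derivative_at_within by (simp add: linear_conv_bounded_linear)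
qed

lemma has_derivative_radial_limit:
  fixes f :: "complex^'n \<Rightarrow> complex^'m"
  assumes der: "(f has_derivative L) (at 0)" and f0: "f 0 = 0"
    and L_linear: "\<And>c v. L (c *s v) = c *s L v"
  shows "((\<lambda>u. (1/u) *s f (u *s v)) \<longlongrightarrow> L v) (at 0)"
proof (cases "v = 0")
  case True
  then show ?thesis
    using L_linear[of 0 0] f0 by simp
next
  case False
  have remainder: "((\<lambda>h. norm (f h - L h) / norm h) \<longlongrightarrow> 0) (at 0)"
    using der f0 unfolding has_derivative_at by simp
  have line: "filterlim (\<lambda>u::complex. u *s v) (at 0) (at 0)"
    using False by (intro filterlim_atI tendsto_vector_smult_at_0) (auto simp: eventually_at_filter)
  have "((\<lambda>u. norm (f (u *s v) - L (u *s v)) / norm (u *s v) * norm v) \<longlongrightarrow> 0 * norm v) (at 0)"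
    by (intro tendsto_mult tendsto_const filterlim_compose[OF remainder line])
  moreover have "norm (f (u *s v) - L (u *s v)) / norm (u *s v) * norm v = norm ((1/u) *s f (u *s v) - L v)"
    if "u \<noteq> 0" for u :: complex
  proof -
    have diff: "(1/u) *s f (u *s v) - L v = (1/u) *s (f (u *s v) - L (u *s v))"
      using that by (simp add: L_linear vector_ssub_ldistrib)
    have "norm ((1/u) *s f (u *s v) - L v) = norm (f (u *s v) - L (u *s v)) / cmod u"
      unfolding diff norm_vector_smult by (simp add: norm_divide)
    then show ?thesis
      using that False by (simp add: norm_vector_smult)
  qed
  then have "\<forall>\<^sub>F u in at 0. norm (f (u *s v) - L (u *s v)) / norm (u *s v) * norm v
      = norm ((1/u) *s f (u *s v) - L v)"
    by (simp add: eventually_at_filter)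
  ultimately have "((\<lambda>u. norm ((1/u) *s f (u *s v) - L v)) \<longlongrightarrow> 0) (at 0)"
    by (simp add: Lim_transform_eventually)
  then show ?thesis
    by (simp add: tendsto_norm_zero_iff LIM_zero_iff)
qed

lemma radial_limit_weighted_sum:
  fixes f :: "nat \<Rightarrow> complex^'n \<Rightarrow> complex^'m" and b :: "nat \<Rightarrow> complex^'n \<Rightarrow> complex"
  assumes "\<And>j. j \<in> J \<Longrightarrow> isCont (b j) 0"
    and "\<And>j. j \<in> J \<Longrightarrow> ((\<lambda>u. (1/u) *s f j (u *s v)) \<longlongrightarrow> l j) (at 0)"
  shows "((\<lambda>u. (1/u) *s (\<Sum>j\<in>J. b j (u *s v) *s f j (u *s v))) \<longlongrightarrow> (\<Sum>j\<in>J. b j 0 *s l j)) (at 0)"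
proof -
  have "((\<lambda>u. \<Sum>j\<in>J. b j (u *s v) *s ((1/u) *s f j (u *s v))) \<longlongrightarrow> (\<Sum>j\<in>J. b j 0 *s l j)) (at 0)"
    using assms by (intro tendsto_sum tendsto_vector_smult isCont_tendsto_compose[OF _ tendsto_vector_smult_at_0])
  moreover have "(1/u) *s (\<Sum>j\<in>J. b j (u *s v) *s f j (u *s v))
      = (\<Sum>j\<in>J. b j (u *s v) *s ((1/u) *s f j (u *s v)))" for u
    by (simp add: vec_eq_iff sum_distrib_left mult.left_commute)
  ultimately show ?thesis
    by simp
qed

lemma permutes_rank_decreasing_eq_id:
  fixes r :: "'a::finite \<Rightarrow> nat"
  assumes p: "p permutes UNIV" and r: "inj r" and le: "\<And>i. r (p i) \<le> r i"
  shows "p = id"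
proof -
  have "(\<Sum>i\<in>UNIV. r (p i)) = (\<Sum>i\<in>UNIV. r i)"
    using sum.permute[OF p, of r] by (simp add: o_def)
  then have "r (p i) = r i" for i
    using le sum_strict_mono_ex1[of UNIV "\<lambda>i. r (p i)" r] by (metis finite le_less order.irrefl UNIV_I)
  then show ?thesis
    using r by (auto simp: inj_def fun_eq_iff)
qed

lemma det_triangular_wrt_rank:
  fixes A :: "'a::comm_ring_1^'n::finite^'n" and r :: "'n \<Rightarrow> nat"
  assumes r: "inj r" and zero: "\<And>i j. r i < r j \<Longrightarrow> A$i$j = 0"
  shows "det A = (\<Prod>i\<in>UNIV. A$i$i)"
proof -
  have "\<forall>p \<in> {p. p permutes (UNIV :: 'n set)} - {id}. of_int (sign p) * (\<Prod>i\<in>UNIV. A$i$p i) = 0"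
  proof
    fix p assume p: "p \<in> {p. p permutes (UNIV :: 'n set)} - {id}"
    obtain i where "r i < r (p i)"
      using p permutes_rank_decreasing_eq_id[OF _ r, of p] by (metis DiffE insertCI leI mem_Collect_eq)
    from zero[OF this] have "(\<Prod>i\<in>UNIV. A$i$p i) = 0"
      by (intro prod_zero) auto
    then show "of_int (sign p) * (\<Prod>i\<in>UNIV. A$i$p i) = 0"
      by simp
  qed
  from sum.mono_neutral_cong_left[OF finite_permutations[OF finite] _ this] show ?thesis
    unfolding det_def by (simp add: permutes_id sign_id)
qed

lemma has_derivative_FA:
  fixes idx :: "nat \<Rightarrow> 'n::finite"
  shows "(FA idx has_derivative (\<lambda>h. \<chi> i. if i = idx 1
      then of_nat (CARD('n) + 1) * h $ idx 1 * (x $ idx 1) ^ CARD('n)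
        + (\<Sum>k\<in>{2..CARD('n)}. x $ idx k * (of_nat (k - 1) * h $ idx 1 * (x $ idx 1) ^ (k - 2))
            + h $ idx k * (x $ idx 1) ^ (k - 1))
      else h $ i)) (at x)"
proof (rule has_derivative_vec_lambda, goal_cases)
  case (1 i)
  have nth: "((\<lambda>x. x $ j) has_derivative (\<lambda>h. h $ j)) (at x)" for j :: 'n
    by (rule bounded_linear.has_derivative[OF bounded_linear_vec_nth has_derivative_ident])
  show ?case
  proof (cases "i = idx 1")
    case True
    have "((\<lambda>x. (x $ idx 1) ^ (CARD('n) + 1) + (\<Sum>k\<in>{2..CARD('n)}. x $ idx k * (x $ idx 1) ^ (k - 1)))
      has_derivative (\<lambda>h. of_nat (CARD('n) + 1) * h $ idx 1 * (x $ idx 1) ^ (CARD('n) + 1 - 1)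
        + (\<Sum>k\<in>{2..CARD('n)}. x $ idx k * (of_nat (k - 1) * h $ idx 1 * (x $ idx 1) ^ (k - 1 - 1))
            + h $ idx k * (x $ idx 1) ^ (k - 1)))) (at x)"
      by (intro derivative_eq_intros; (rule nth)?) auto
    then show ?thesis
      using True by (simp add: FA_def numeral_2_eq_2)
  next
    case False
    then show ?thesis
      by (simp add: FA_def nth)
  qed
qed

lemma frechet_derivative_FA_off_first:
  fixes idx :: "nat \<Rightarrow> 'n::finite"
  assumes "i \<noteq> idx 1"
  shows "frechet_derivative (FA idx) (at x) h $ i = h $ i"
  using assms by (simp add: frechet_derivative_at[OF has_derivative_FA, symmetric])

lemma etaL_smult: "etaL idx j (c *s X) = c *s etaL idx j X"
  unfolding etaL_def
  by (auto simp: vec_eq_iff sum_component sum_distrib_left axis_def mult.left_commute intro!: sum.cong)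

locale A_n_coordinates =
  fixes idx :: "nat \<Rightarrow> 'n::finite"
  assumes idx_bij: "bij_betw idx {1..CARD('n)} UNIV"
begin

abbreviation basis_vec :: "nat \<Rightarrow> complex^'n" where
  "basis_vec m \<equiv> axis (idx m) 1"

definition coord_index :: "'n \<Rightarrow> nat" where
  "coord_index i = inv_into {1..CARD('n)} idx i"

lemma coord_index: "coord_index i \<in> {1..CARD('n)}" "idx (coord_index i) = i"
proof -
  have "i \<in> idx ` {1..CARD('n)}"
    using idx_bij by (simp add: bij_betw_def)
  then show "coord_index i \<in> {1..CARD('n)}" "idx (coord_index i) = i"
    unfolding coord_index_def by (rule inv_into_into, rule f_inv_into_f)
qed

lemma idx_eq_iff: "k \<in> {1..CARD('n)} \<Longrightarrow> m \<in> {1..CARD('n)} \<Longrightarrow> idx k = idx m \<longleftrightarrow> k = m"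
  using idx_bij unfolding bij_betw_def by (auto dest: inj_onD)

lemma idx_ne_first: "k \<in> {2..CARD('n)} \<Longrightarrow> idx k \<noteq> idx 1"
  using idx_eq_iff[of k 1] by (auto simp: Suc_leI)

definition coord_rank :: "'n \<Rightarrow> nat" where
  "coord_rank i = (if i = idx 1 then CARD('n) + 1 else coord_index i)"

lemma inj_coord_rank: "inj coord_rank"
proof (rule injI)
  fix i j assume eq: "coord_rank i = coord_rank j"
  have "coord_index l \<noteq> CARD('n) + 1" for l
    using coord_index(1)[of l] by auto
  then show "i = j"
    using eq coord_index(2)[of i] coord_index(2)[of j] unfolding coord_rank_def by (metis (full_types))
qed

lemma FA_first_axis: "FA idx (s *s basis_vec 1) = s ^ (CARD('n) + 1) *s basis_vec 1"
  unfolding FA_def using idx_ne_first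
  by (auto simp: vec_eq_iff axis_def intro!: sum.neutral)

lemma FA_other_axis:
  assumes m: "m \<in> {2..CARD('n)}"
  shows "FA idx (s *s basis_vec m) = s *s basis_vec m"
proof -
  have "(\<Sum>k\<in>{2..CARD('n)}. (s *s basis_vec m) $ idx k * ((s *s basis_vec m) $ idx 1) ^ (k - 1)) = 0"
    using idx_ne_first[OF m] by (intro sum.neutral) (auto simp: axis_def)
  then show ?thesis
    unfolding FA_def using idx_ne_first[OF m] by (auto simp: vec_eq_iff axis_def)
qed

lemma frechet_derivative_FA_first_axis:
  "frechet_derivative (FA idx) (at (s *s basis_vec 1)) h $ idx 1
    = of_nat (CARD('n) + 1) * s ^ CARD('n) * h $ idx 1 + (\<Sum>k\<in>{2..CARD('n)}. s ^ (k - 1) * h $ idx k)"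
  by (simp add: frechet_derivative_at[OF has_derivative_FA, symmetric] mult_ac)
    (rule sum.cong[OF refl], use idx_ne_first in \<open>force simp: axis_def\<close>)

lemma etaL_combination_entry:
  assumes m: "m \<in> {1..CARD('n)}" and k: "k \<in> {1..CARD('n)}"
  shows "(\<Sum>j\<in>{1..CARD('n)}. c j *s etaL idx j (basis_vec m)) $ idx k
    = (if m \<le> k then c (k + 1 - m) * of_nat (CARD('n) + 2 - m) else 0)"
proof -
  have "etaL idx j (basis_vec m) $ idx k = (if j \<le> k \<and> m = k + 1 - j then of_nat (CARD('n) + 1 + j - k) else 0)"
    if j: "j \<in> {1..CARD('n)}" for j
  proof -
    have "etaL idx j (basis_vec m) $ idx k
        = (\<Sum>l\<in>{j..CARD('n)}. if l = k then of_nat (CARD('n) + 1 + j - k) * basis_vec m $ idx (k + 1 - j) else 0)"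
      unfolding etaL_def sum_component using j k
      by (intro sum.cong) (auto simp: axis_def idx_eq_iff)
    also have "\<dots> = (if j \<le> k then of_nat (CARD('n) + 1 + j - k) * basis_vec m $ idx (k + 1 - j) else 0)"
      using k by simp
    finally have entry: "etaL idx j (basis_vec m) $ idx k
        = (if j \<le> k then of_nat (CARD('n) + 1 + j - k) * basis_vec m $ idx (k + 1 - j) else 0)" .
    show ?thesis
    proof (cases "j \<le> k")
      case True
      then have "k + 1 - j \<in> {1..CARD('n)}"
        using j k by auto
      then show ?thesis
        using True m entry by (auto simp: axis_def idx_eq_iff)
    qed (simp add: entry)
  qed
  then have "(\<Sum>j\<in>{1..CARD('n)}. c j *s etaL idx j (basis_vec m)) $ idx k
      = (\<Sum>j\<in>{1..CARD('n)}. if j = k + 1 - m \<and> m \<le> k then c j * of_nat (CARD('n) + 2 - m) else 0)"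
    unfolding sum_component vector_smult_component using m by (intro sum.cong) auto
  also have "\<dots> = (if m \<le> k then c (k + 1 - m) * of_nat (CARD('n) + 2 - m) else 0)"
    using m k by (auto simp: sum.delta')
  finally show ?thesis .
qed

lemma etaL_combination_lower:
  assumes "m \<in> {2..CARD('n)}" "k \<in> {2..CARD('n)}" "k < m"
  shows "(\<Sum>j\<in>{1..CARD('n)}. c j *s etaL idx j (basis_vec m)) $ idx k = 0"
  using etaL_combination_entry[of m k c] assms by auto

lemma etaL_combination_charpoly:
  "(t - (\<Sum>j\<in>{1..CARD('n)}. c j *s etaL idx j (basis_vec 1)) $ idx 1 / of_nat (CARD('n) + 1))
     * (\<Prod>k\<in>{2..CARD('n)}. t - (\<Sum>j\<in>{1..CARD('n)}. c j *s etaL idx j (basis_vec k)) $ idx k)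
   = (\<Prod>k\<in>{1..CARD('n)}. t - c 1 * of_nat k)"
proof -
  have diagonal: "(\<Sum>j\<in>{1..CARD('n)}. c j *s etaL idx j (basis_vec k)) $ idx k
      = c 1 * of_nat (CARD('n) + 2 - k)" if "k \<in> {1..CARD('n)}" for k
    using etaL_combination_entry[OF that that] by simp
  have first: "(\<Sum>j\<in>{1..CARD('n)}. c j *s etaL idx j (basis_vec 1)) $ idx 1 / of_nat (CARD('n) + 1)
      = c 1"
    using diagonal[of 1] by (simp add: Suc_leI del: of_nat_Suc)
  have "(\<Prod>k\<in>{2..CARD('n)}. t - (\<Sum>j\<in>{1..CARD('n)}. c j *s etaL idx j (basis_vec k)) $ idx k)
      = (\<Prod>k\<in>{2..CARD('n)}. t - c 1 * of_nat (CARD('n) + 2 - k))"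
    using diagonal by (intro prod.cong) auto
  also have "\<dots> = (\<Prod>k\<in>{2..CARD('n)}. t - c 1 * of_nat k)"
    using prod.atLeastAtMost_rev[of "\<lambda>k. t - c 1 * of_nat k" 2 "CARD('n)"] by simp
  finally have rest: "(\<Prod>k\<in>{2..CARD('n)}. t - (\<Sum>j\<in>{1..CARD('n)}. c j *s etaL idx j (basis_vec k)) $ idx k)
      = (\<Prod>k\<in>{2..CARD('n)}. t - c 1 * of_nat k)" .
  show ?thesis
    unfolding first rest
    using prod.atLeast_Suc_atMost[of 1 "CARD('n)" "\<lambda>k. t - c 1 * of_nat k"]
    by (simp add: Suc_leI numeral_2_eq_2)
qed

end

locale lifted_field = A_n_coordinates idx for idx :: "nat \<Rightarrow> 'n::finite" +
  fixes H L xi D :: "complex^'n \<Rightarrow> complex^'n"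
  assumes field_radial: "\<And>v. ((\<lambda>u. (1/u) *s H (u *s v)) \<longlongrightarrow> L v) (at 0)"
    and lift: "eventually (\<lambda>x. H (FA idx x) = frechet_derivative (FA idx) (at x) (xi x)) (nhds 0)"
    and lift_has_derivative: "(xi has_derivative D) (at 0)"
    and lift_derivative_linear: "\<And>c v. D (c *s v) = c *s D v"
begin

lemma lift_off_first: "eventually (\<lambda>x. \<forall>i. i \<noteq> idx 1 \<longrightarrow> xi x $ i = H (FA idx x) $ i) (nhds 0)"
  using lift by eventually_elim (simp add: frechet_derivative_FA_off_first)

lemma lift_first_axis_equation:
  "eventually (\<lambda>s. of_nat (CARD('n) + 1) * s ^ CARD('n) * xi (s *s basis_vec 1) $ idx 1
     + (\<Sum>k\<in>{2..CARD('n)}. s ^ (k - 1) * H (s ^ (CARD('n) + 1) *s basis_vec 1) $ idx k)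
     = H (s ^ (CARD('n) + 1) *s basis_vec 1) $ idx 1) (at 0)"
  using eventually_nhds_0_along_line[OF lift_off_first, of "basis_vec 1"]
    eventually_nhds_0_along_line[OF lift, of "basis_vec 1"]
proof eventually_elim
  case (elim s)
  have xi_off: "xi (s *s basis_vec 1) $ idx k = H (s ^ (CARD('n) + 1) *s basis_vec 1) $ idx k"
    if "k \<in> {2..CARD('n)}" for k
    using elim(1) idx_ne_first[OF that] unfolding FA_first_axis by blast
  have "H (s ^ (CARD('n) + 1) *s basis_vec 1) $ idx 1
      = frechet_derivative (FA idx) (at (s *s basis_vec 1)) (xi (s *s basis_vec 1)) $ idx 1"
    using elim(2) unfolding FA_first_axis by simp
  also have "\<dots> = of_nat (CARD('n) + 1) * s ^ CARD('n) * xi (s *s basis_vec 1) $ idx 1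
      + (\<Sum>k\<in>{2..CARD('n)}. s ^ (k - 1) * H (s ^ (CARD('n) + 1) *s basis_vec 1) $ idx k)"
    unfolding frechet_derivative_FA_first_axis by (intro arg_cong2[where f="(+)"] sum.cong refl) (simp only: xi_off)
  finally show ?case ..
qed

text \<open>F maps s e_1 to s^(n+1) e_1, so along the x_1-axis the field is seen at scale s^(n+1).\<close>

definition rescaled_field :: "complex \<Rightarrow> complex^'n" where
  "rescaled_field s = (1 / s ^ (CARD('n) + 1)) *s H (s ^ (CARD('n) + 1) *s basis_vec 1)"

lemma rescaled_field_tendsto: "(rescaled_field \<longlongrightarrow> L (basis_vec 1)) (at 0)"
proof -
  have "filterlim (\<lambda>s::complex. s ^ (CARD('n) + 1)) (at 0) (at 0)"
    by (intro filterlim_atI) (auto intro!: tendsto_eq_intros simp: eventually_at_filter)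
  then show ?thesis
    unfolding rescaled_field_def using filterlim_compose[OF field_radial] by (simp add: o_def)
qed

lemma field_first_axis:
  "s \<noteq> 0 \<Longrightarrow> H (s ^ (CARD('n) + 1) *s basis_vec 1) = s ^ (CARD('n) + 1) *s rescaled_field s"
  by (simp add: rescaled_field_def vector_smult_assoc)

lemma lift_first_axis_first_component:
  "\<forall>\<^sub>F s in at 0. ((1/s) *s xi (s *s basis_vec 1)) $ idx 1
     = (rescaled_field s $ idx 1 - (\<Sum>k\<in>{2..CARD('n)}. s ^ (k - 1) * rescaled_field s $ idx k))
       / of_nat (CARD('n) + 1)"
proof -
  have "\<forall>\<^sub>F s in at (0::complex). s \<noteq> 0"
    by (simp add: eventually_at_filter)
  with lift_first_axis_equation show ?thesis
  proof eventually_elim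
    case (elim s)
    have "s ^ CARD('n) * (of_nat (CARD('n) + 1) * xi (s *s basis_vec 1) $ idx 1
          + s * (\<Sum>k\<in>{2..CARD('n)}. s ^ (k - 1) * rescaled_field s $ idx k))
        = s ^ CARD('n) * (s * rescaled_field s $ idx 1)"
      using elim(1) unfolding field_first_axis[OF elim(2)] vector_smult_component
      by (simp add: sum_distrib_left algebra_simps)
    then have "of_nat (CARD('n) + 1) * xi (s *s basis_vec 1) $ idx 1
        + s * (\<Sum>k\<in>{2..CARD('n)}. s ^ (k - 1) * rescaled_field s $ idx k)
        = s * rescaled_field s $ idx 1"
      using elim(2) by simp
    then show ?case
      using elim(2) by (simp add: field_simps del: of_nat_Suc)
  qed
qed

lemma lift_first_axis_off_first:
  "\<forall>\<^sub>F s in at 0. \<forall>i. i \<noteq> idx 1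
     \<longrightarrow> ((1/s) *s xi (s *s basis_vec 1)) $ i = s ^ CARD('n) * rescaled_field s $ i"
proof -
  have "\<forall>\<^sub>F s in at (0::complex). s \<noteq> 0"
    by (simp add: eventually_at_filter)
  with eventually_nhds_0_along_line[OF lift_off_first, of "basis_vec 1"] show ?thesis
  proof eventually_elim
    case (elim s)
    then show ?case
      unfolding FA_first_axis field_first_axis[OF elim(2)] by (simp add: field_simps)
  qed
qed

lemma lift_first_axis_radial:
  "((\<lambda>s. (1/s) *s xi (s *s basis_vec 1))
    \<longlongrightarrow> (L (basis_vec 1) $ idx 1 / of_nat (CARD('n) + 1)) *s basis_vec 1) (at 0)"
proof (rule vec_tendstoI)
  fix i
  show "((\<lambda>s. ((1/s) *s xi (s *s basis_vec 1)) $ i)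
      \<longlongrightarrow> ((L (basis_vec 1) $ idx 1 / of_nat (CARD('n) + 1)) *s basis_vec 1) $ i) (at 0)"
  proof (cases "i = idx 1")
    case True
    have "((\<lambda>s. (rescaled_field s $ idx 1 - (\<Sum>k\<in>{2..CARD('n)}. s ^ (k - 1) * rescaled_field s $ idx k))
          / of_nat (CARD('n) + 1))
        \<longlongrightarrow> (L (basis_vec 1) $ idx 1 - (\<Sum>k\<in>{2..CARD('n)}. 0 ^ (k - 1) * L (basis_vec 1) $ idx k))
          / of_nat (CARD('n) + 1)) (at 0)"
      by (intro tendsto_intros tendsto_vec_nth rescaled_field_tendsto) (simp del: of_nat_Suc)
    moreover have "(\<Sum>k\<in>{2..CARD('n)}. (0::complex) ^ (k - 1) * L (basis_vec 1) $ idx k) = 0"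
      by (intro sum.neutral) auto
    ultimately show ?thesis
      using True tendsto_cong[OF lift_first_axis_first_component] by simp
  next
    case False
    have "((\<lambda>s. s ^ CARD('n) * rescaled_field s $ i) \<longlongrightarrow> 0 ^ CARD('n) * L (basis_vec 1) $ i) (at 0)"
      by (intro tendsto_intros tendsto_vec_nth rescaled_field_tendsto)
    moreover have "\<forall>\<^sub>F s in at 0. ((1/s) *s xi (s *s basis_vec 1)) $ i = s ^ CARD('n) * rescaled_field s $ i"
      using lift_first_axis_off_first False by (auto elim: eventually_mono)
    ultimately show ?thesis
      using False tendsto_cong by (fastforce simp: zero_power axis_def)
  qed
qed

lemma lift_zero: "xi 0 = 0"
proof -
  have "((\<lambda>s. s *s ((1/s) *s xi (s *s basis_vec 1))) \<longlongrightarrow> 0) (at 0)"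
    using tendsto_vector_smult[OF tendsto_ident_at lift_first_axis_radial] by simp
  then have "((\<lambda>s. xi (s *s basis_vec 1)) \<longlongrightarrow> 0) (at 0)"
    by (rule Lim_transform_eventually) (simp add: eventually_at_filter vector_smult_assoc)
  moreover have "((\<lambda>s. xi (s *s basis_vec 1)) \<longlongrightarrow> xi 0) (at 0)"
    using has_derivative_continuous[OF lift_has_derivative] tendsto_vector_smult_at_0
    by (rule isCont_tendsto_compose)
  ultimately show ?thesis
    by (rule tendsto_unique[OF at_neq_bot, rotated])
qed

lemma lift_derivative_first_axis:
  "D (basis_vec 1) = (L (basis_vec 1) $ idx 1 / of_nat (CARD('n) + 1)) *s basis_vec 1"
  using has_derivative_radial_limit[OF lift_has_derivative lift_zero lift_derivative_linear]
    lift_first_axis_radial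
  by (rule tendsto_unique[OF at_neq_bot])

lemma lift_derivative_other_axis:
  assumes m: "m \<in> {2..CARD('n)}" and i: "i \<noteq> idx 1"
  shows "D (basis_vec m) $ i = L (basis_vec m) $ i"
proof -
  have "((\<lambda>u. ((1/u) *s H (u *s basis_vec m)) $ i) \<longlongrightarrow> L (basis_vec m) $ i) (at 0)"
    using field_radial by (rule tendsto_vec_nth)
  moreover have "\<forall>\<^sub>F u in at 0. ((1/u) *s H (u *s basis_vec m)) $ i = ((1/u) *s xi (u *s basis_vec m)) $ i"
    using eventually_nhds_0_along_line[OF lift_off_first, of "basis_vec m"]
  proof eventually_elim
    case (elim u)
    then show ?case
      using i unfolding FA_other_axis[OF m] by simp
  qed
  ultimately have "((\<lambda>u. ((1/u) *s xi (u *s basis_vec m)) $ i) \<longlongrightarrow> L (basis_vec m) $ i) (at 0)"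
    by (rule Lim_transform_eventually)
  moreover have "((\<lambda>u. ((1/u) *s xi (u *s basis_vec m)) $ i) \<longlongrightarrow> D (basis_vec m) $ i) (at 0)"
    using has_derivative_radial_limit[OF lift_has_derivative lift_zero lift_derivative_linear]
    by (rule tendsto_vec_nth)
  ultimately show ?thesis
    by (rule tendsto_unique[OF at_neq_bot, rotated])
qed

lemma lift_derivative_triangular:
  assumes lower: "\<And>m k. m \<in> {2..CARD('n)} \<Longrightarrow> k \<in> {2..CARD('n)} \<Longrightarrow> k < m
      \<Longrightarrow> L (basis_vec m) $ idx k = 0"
    and less: "coord_rank i < coord_rank j"
  shows "D (axis j 1) $ i = 0"
proof -
  have i: "i \<noteq> idx 1"
    using less coord_index(1)[of j] unfolding coord_rank_def by (auto split: if_splits)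
  then have "coord_index i \<noteq> 1"
    using coord_index(2)[of i] by auto
  then have ki: "coord_index i \<in> {2..CARD('n)}"
    using coord_index(1)[of i] by auto
  show ?thesis
  proof (cases "j = idx 1")
    case True
    then show ?thesis
      using i unfolding True lift_derivative_first_axis by (simp add: axis_def)
  next
    case False
    then have kj: "coord_index j \<in> {2..CARD('n)}" "coord_index i < coord_index j"
      using less i coord_index(1)[of j] ki unfolding coord_rank_def by auto
    have "D (axis j 1) $ i = D (basis_vec (coord_index j)) $ i"
      by (simp only: coord_index(2))
    also have "\<dots> = L (basis_vec (coord_index j)) $ idx (coord_index i)"
      using lift_derivative_other_axis[OF kj(1) i] by (simp only: coord_index(2))
    also have "\<dots> = 0"
      using lower kj ki by blast
    finally show ?thesis .
  qed
qed

lemma lift_charpoly: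
  assumes lower: "\<And>m k. m \<in> {2..CARD('n)} \<Longrightarrow> k \<in> {2..CARD('n)} \<Longrightarrow> k < m
      \<Longrightarrow> L (basis_vec m) $ idx k = 0"
  shows "det (mat t - matrix D) = (t - L (basis_vec 1) $ idx 1 / of_nat (CARD('n) + 1))
      * (\<Prod>k\<in>{2..CARD('n)}. t - L (basis_vec k) $ idx k)"
proof -
  define M where "M = mat t - matrix D"
  have M: "M $ i $ j = (if i = j then t else 0) - D (axis j 1) $ i" for i j
    by (simp add: M_def mat_def matrix_def)
  have "det M = (\<Prod>i\<in>UNIV. M $ i $ i)"
  proof (rule det_triangular_wrt_rank[OF inj_coord_rank])
    fix i j assume "coord_rank i < coord_rank j"
    then show "M $ i $ j = 0"
      using lift_derivative_triangular[OF lower] unfolding M by auto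
  qed
  also have "\<dots> = (\<Prod>k\<in>{1..CARD('n)}. M $ idx k $ idx k)"
    using prod.reindex_bij_betw[OF idx_bij, of "\<lambda>i. M $ i $ i"] by simp
  also have "\<dots> = M $ idx 1 $ idx 1 * (\<Prod>k\<in>{2..CARD('n)}. M $ idx k $ idx k)"
    using prod.atLeast_Suc_atMost[of 1 "CARD('n)" "\<lambda>k. M $ idx k $ idx k"]
    by (simp add: Suc_leI numeral_2_eq_2)
  also have "\<dots> = (t - L (basis_vec 1) $ idx 1 / of_nat (CARD('n) + 1))
      * (\<Prod>k\<in>{2..CARD('n)}. t - L (basis_vec k) $ idx k)"
  proof -
    have "M $ idx 1 $ idx 1 = t - L (basis_vec 1) $ idx 1 / of_nat (CARD('n) + 1)"
      unfolding M lift_derivative_first_axis by simp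
    moreover have "M $ idx k $ idx k = t - L (basis_vec k) $ idx k" if k: "k \<in> {2..CARD('n)}" for k
      unfolding M lift_derivative_other_axis[OF k idx_ne_first[OF k]] by simp
    ultimately show ?thesis
      by (simp only: cong: prod.cong)
  qed
  finally show ?thesis
    unfolding M_def .
qed

end

theorem mainTheorem10:
  fixes idx :: "nat \<Rightarrow> 'n::finite"
    and eta :: "nat \<Rightarrow> complex^'n \<Rightarrow> complex^'n"
    and b :: "nat \<Rightarrow> complex^'n \<Rightarrow> complex"
  assumes idx: "bij_betw idx {1..CARD('n)} UNIV"
    and eta_lift: "\<forall>j\<in>{1..CARD('n)}. liftable (FA idx) (eta j)"
    and eta_lin: "\<forall>j\<in>{1..CARD('n)}. eta j 0 = 0 \<and> (eta j has_derivative etaL idx j) (at 0)"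
    and eta_gen: "\<forall>th. liftable (FA idx) th \<longrightarrow>
        (\<exists>c. (\<forall>j\<in>{1..CARD('n)}. holo_fun (c j)) \<and>
             eventually (\<lambda>x. th x = (\<Sum>j\<in>{1..CARD('n)}. c j x *s eta j x)) (nhds 0))"
    and eta_indep: "\<forall>c. (\<forall>j\<in>{1..CARD('n)}. holo_fun (c j)) \<and>
        eventually (\<lambda>x. (\<Sum>j\<in>{1..CARD('n)}. c j x *s eta j x) = 0) (nhds 0) \<longrightarrow>
        (\<forall>j\<in>{1..CARD('n)}. eventually (\<lambda>x. c j x = 0) (nhds 0))"
    and b_holo: "\<forall>j\<in>{1..CARD('n)}. holo_fun (b j)"
    and b_lift: "liftable (FA idx) (\<lambda>x. \<Sum>j\<in>{1..CARD('n)}. b j x *s eta j x)"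
  shows "\<exists>xi D. holo_map xi \<and>
     eventually (\<lambda>x. (\<Sum>j\<in>{1..CARD('n)}. b j (FA idx x) *s eta j (FA idx x))
                     = frechet_derivative (FA idx) (at x) (xi x)) (nhds 0) \<and>
     xi 0 = 0 \<and> (xi has_derivative D) (at 0) \<and>
     (\<forall>t::complex. det (mat t - matrix D) = (\<Prod>k\<in>{1..CARD('n)}. t - b 1 0 * of_nat k))"
proof -
  \<comment> \<open>Only the linear parts of the eta_j matter.\<close>
  interpret A_n_coordinates idx
    using idx by unfold_locales
  define H where "H x = (\<Sum>j\<in>{1..CARD('n)}. b j x *s eta j x)" for x
  define L where "L v = (\<Sum>j\<in>{1..CARD('n)}. b j 0 *s etaL idx j v)" for v
  obtain xi where xi: "holo_map xi"
    and lift: "eventually (\<lambda>x. H (FA idx x) = frechet_derivative (FA idx) (at x) (xi x)) (nhds 0)"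
    using b_lift unfolding liftable_def H_def by blast
  obtain D where D: "(xi has_derivative D) (at 0)" "\<And>c v. D (c *s v) = c *s D v"
    using xi unfolding holo_map_def by blast
  have "((\<lambda>u. (1/u) *s H (u *s v)) \<longlongrightarrow> L v) (at 0)" for v
    unfolding H_def L_def using b_holo eta_lin
    by (intro radial_limit_weighted_sum holo_fun_isCont_0 has_derivative_radial_limit etaL_smult) auto
  then interpret lifted_field idx H L xi D
    using lift D by unfold_locales
  have "L (basis_vec m) $ idx k = 0"
    if "m \<in> {2..CARD('n)}" "k \<in> {2..CARD('n)}" "k < m" for m k
    unfolding L_def using that by (rule etaL_combination_lower)
  then have "det (mat t - matrix D) = (\<Prod>k\<in>{1..CARD('n)}. t - b 1 0 * of_nat k)" for t
    using lift_charpoly etaL_combination_charpoly[of t "\<lambda>j. b j 0"] unfolding L_def by simp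
  then show ?thesis
    using xi lift lift_zero D(1) unfolding H_def by blast
qed

end
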